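(* Let $F=\{f_i\}_{i=1}^N$ be a tight frame for $\mathcal H$. Then the following are equivalent: (i) $(F,S_F^{-1}F)\in\mathcal F^{(1)}$; (ii) $(F,S_F^{-1}F)\in\mathcal R^{(1)}$; (iii) $(F,S_F^{-1}F)\in\mathcal N^{(1)}$.
   Context: $\mathcal H$ is a complex Hilbert space of finite dimension $n$, inner product linear in the first argument, $N\ge n$. A finite sequence $F=\{f_i\}_{i=1}^N$ is a frame if there are $0<A\le B$ with $A\|f\|^2\le\sum_i|\langle f,f_i\rangle|^2\le B\|f\|^2$ for all $f$; tight if one can take $A=B$. $S_Ff=\sum_i\langle f,f_i\rangle f_i$; $S_F^{-1}F=\{S_F^{-1}f_i\}$ is the canonical dual. $G=\{g_i\}_{i=1}^N$ is a dual of $F$ if $f=\sum_i\langle f,g_i\rangle f_i$ for all $f$; $(F,G)$ is then an $(N,n)$ dual pair. $E_{\Lambda,F,G}f=\sum_{i\in\Lambda}\langle f,f_i\rangle g_i$. For a measure $\mathcal M$ on operators, let $\mathcal M^{(1)}_{F,G}=\max_{1\le i\le N}\mathcal M(E_{\{i\},F,G})$ and call $(F,G)$ optimal for $\mathcal M$ if $\mathcal M^{(1)}_{F,G}$ equals the infimum of $\mathcal M^{(1)}_{F',G'}$ over all $(N,n)$ dual pairs $(F',G')$ for $\mathcal H$. $\mathcal F^{(1)}$, $\mathcal R^{(1)}$, $\mathcal N^{(1)}$ denote the sets of optimal pairs for, respectively, the Frobenius norm $\|T\|_{\mathcal F}=\sqrt{\operatorname{tr}(T^*T)}$, the spectral radius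 $\rho(T)$, and the numerical radius $\omega(T)=\sup\{|\langle Tf,f\rangle|:\|f\|=1\}$. *)

theory Defs
  imports "HOL-Analysis.Analysis"
begin

text \<open>The n-dimensional complex Hilbert space is modelled as complex^'n with n = CARD('n);
  inner product linear in the first argument. Sequences are indexed by {1..N}.\<close>

definition cinner :: "complex^'n \<Rightarrow> complex^'n \<Rightarrow> complex" where
  "cinner f g = (\<Sum>j\<in>UNIV. f $ j * cnj (g $ j))"

definition is_frame :: "nat \<Rightarrow> (nat \<Rightarrow> complex^'n) \<Rightarrow> bool" where
  "is_frame N F \<longleftrightarrow> (\<exists>A B. 0 < A \<and> A \<le> B \<and>
     (\<forall>f. A * (norm f)\<^sup>2 \<le> (\<Sum>i=1..N. (cmod (cinner f (F i)))\<^sup>2)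
        \<and> (\<Sum>i=1..N. (cmod (cinner f (F i)))\<^sup>2) \<le> B * (norm f)\<^sup>2))"

definition is_tight_frame :: "nat \<Rightarrow> (nat \<Rightarrow> complex^'n) \<Rightarrow> bool" where
  "is_tight_frame N F \<longleftrightarrow> (\<exists>A. 0 < A \<and>
     (\<forall>f. (\<Sum>i=1..N. (cmod (cinner f (F i)))\<^sup>2) = A * (norm f)\<^sup>2))"

definition frame_op :: "nat \<Rightarrow> (nat \<Rightarrow> complex^'n) \<Rightarrow> complex^'n \<Rightarrow> complex^'n" where
  "frame_op N F f = (\<Sum>i=1..N. cinner f (F i) *s F i)"

definition canonical_dual :: "nat \<Rightarrow> (nat \<Rightarrow> complex^'n) \<Rightarrow> nat \<Rightarrow> complex^'n" where
  "canonical_dual N F i = inv (frame_op N F) (F i)"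

definition is_dual :: "nat \<Rightarrow> (nat \<Rightarrow> complex^'n) \<Rightarrow> (nat \<Rightarrow> complex^'n) \<Rightarrow> bool" where
  "is_dual N F G \<longleftrightarrow> (\<forall>f. f = (\<Sum>i=1..N. cinner f (G i) *s F i))"

definition E_op :: "nat set \<Rightarrow> (nat \<Rightarrow> complex^'n) \<Rightarrow> (nat \<Rightarrow> complex^'n) \<Rightarrow> complex^'n \<Rightarrow> complex^'n" where
  "E_op \<Lambda> F G f = (\<Sum>i\<in>\<Lambda>. cinner f (F i) *s G i)"

type_synonym 'n measure_op = "(complex^'n \<Rightarrow> complex^'n) \<Rightarrow> real"

definition M1 :: "'n measure_op \<Rightarrow> nat \<Rightarrow> (nat \<Rightarrow> complex^'n) \<Rightarrow> (nat \<Rightarrow> complex^'n) \<Rightarrow> real" where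
  "M1 M N F G = Max ((\<lambda>i. M (E_op {i} F G)) ` {1..N})"

definition optimal :: "'n measure_op \<Rightarrow> nat \<Rightarrow> (nat \<Rightarrow> complex^'n) \<Rightarrow> (nat \<Rightarrow> complex^'n) \<Rightarrow> bool" where
  "optimal M N F G \<longleftrightarrow> is_dual N F G \<and>
     M1 M N F G = Inf {M1 M N F' G' | F' G'. is_dual N F' G'}"

text \<open>Frobenius norm: sqrt (tr (T* T)) = sqrt (sum over standard basis of |T e_j|^2).\<close>
definition frob_norm :: "'n::finite measure_op" where
  "frob_norm T = sqrt (\<Sum>j\<in>UNIV. (norm (T (axis j 1)))\<^sup>2)"

definition spectral_radius :: "'n::finite measure_op" where
  "spectral_radius T = Sup {cmod l | l. \<exists>x. x \<noteq> 0 \<and> T x = l *s x}"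

definition numerical_radius :: "'n::finite measure_op" where
  "numerical_radius T = Sup {cmod (cinner (T f) f) | f. norm f = 1}"

end

theory Submission
  imports Defs
begin

text \<open>Every operator E_op {i} F G is the rank-one operator x \<mapsto> \<langle>x, f_i\<rangle> g_i. Each of the
  three measures dominates its trace |\<langle>g_i, f_i\<rangle>| and equals \<parallel>h\<parallel>^2 on x \<mapsto> \<langle>x, h\<rangle> h. For any dual
  pair the traces add up to n = tr id, so some index has trace at least n/N; the harmonic
  frame, which is its own dual with all \<parallel>h_k\<parallel>^2 = n/N, attains this bound, so the optimal value
  is n/N for all three measures. For a tight frame with bound A the canonical dual is
  f_i/A, so E_op {i} is positive and all three measures of it equal \<parallel>f_i\<parallel>^2/A. Hence
  each optimality condition says max_i \<parallel>f_i\<parallel>^2/A = n/N.\<close>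

lemma cinner_add_left: "cinner (x + y) z = cinner x z + cinner y z"
  by (simp add: cinner_def sum.distrib ring_distribs)

lemma cinner_add_right: "cinner x (y + z) = cinner x y + cinner x z"
  by (simp add: cinner_def sum.distrib ring_distribs)

lemma cinner_scale_left: "cinner (c *s x) z = c * cinner x z"
  by (simp add: cinner_def sum_distrib_left mult.assoc)

lemma cinner_scale_right: "cinner x (c *s z) = cnj c * cinner x z"
  by (simp add: cinner_def sum_distrib_left mult_ac)

lemma cinner_sum_left: "cinner (\<Sum>i\<in>I. u i) z = (\<Sum>i\<in>I. cinner (u i) z)"
  unfolding cinner_def sum_component sum_distrib_right by (rule sum.swap)

lemma cinner_commute: "cinner y x = cnj (cinner x y)"
  by (simp add: cinner_def mult.commute)

lemma cinner_zero_left [simp]: "cinner 0 x = 0"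
  by (simp add: cinner_def)

lemma cinner_zero_right [simp]: "cinner x 0 = 0"
  by (simp add: cinner_def)

lemma power2_norm_vec: "(norm (x::complex^'n))\<^sup>2 = (\<Sum>j\<in>UNIV. (cmod (x $ j))\<^sup>2)"
  by (simp add: norm_vec_def L2_set_def sum_nonneg)

lemma cinner_self: "cinner x x = of_real ((norm x)\<^sup>2)"
  unfolding power2_norm_vec cinner_def of_real_sum
  by (rule sum.cong) (simp_all add: complex_norm_square[symmetric])

lemma cinner_axis: "cinner (axis j 1) f = cnj (f $ j)"
proof -
  have "cinner (axis j 1) f = (\<Sum>k\<in>UNIV. if k = j then cnj (f $ k) else 0)"
    unfolding cinner_def by (rule sum.cong) (auto simp: axis_def)
  then show ?thesis by simp
qed

lemma cinner_Cauchy_Schwarz: "cmod (cinner a b) \<le> norm a * norm b"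
proof -
  have "cmod (cinner a b) \<le> (\<Sum>j\<in>UNIV. cmod (a $ j) * cmod (b $ j))"
    unfolding cinner_def by (rule order_trans[OF norm_sum]) (simp add: norm_mult)
  also have "\<dots> \<le> L2_set (\<lambda>j. cmod (a $ j)) UNIV * L2_set (\<lambda>j. cmod (b $ j)) UNIV"
    using L2_set_mult_ineq[of "\<lambda>j. cmod (a $ j)" "\<lambda>j. cmod (b $ j)" UNIV] by simp
  finally show ?thesis by (simp add: norm_vec_def)
qed

lemma norm_vector_smult: "norm (c *s (v::complex^'n)) = cmod c * norm v"
proof -
  have "(norm (c *s v))\<^sup>2 = (cmod c * norm v)\<^sup>2"
    unfolding power2_norm_vec power_mult_distrib sum_distrib_left
    by (simp add: norm_mult power_mult_distrib)
  then show ?thesis by (simp add: power2_eq_iff_nonneg)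
qed

lemma ex_norm_eq_1_vec: "\<exists>x::complex^'n. norm x = 1"
proof
  have "(norm (axis m 1 :: complex^'n))\<^sup>2 = (\<Sum>j\<in>UNIV. if j = m then 1 else 0)" for m
    unfolding power2_norm_vec by (rule sum.cong) (auto simp: axis_def)
  then show "norm (axis undefined 1 :: complex^'n) = 1"
    by (simp add: power2_eq_iff_nonneg)
qed

lemma vector_smult_cancel_right:
  assumes "a *s (g::complex^'n) = b *s g" "g \<noteq> 0"
  shows "a = b"
proof -
  obtain j where "g $ j \<noteq> 0" using assms(2) by (metis vec_eq_iff zero_index)
  moreover have "a * g $ j = b * g $ j" using assms(1) by (metis vector_smult_component)
  ultimately show ?thesis by simp
qed

subsection \<open>Rank-one operators\<close>

definition rank_one_op :: "complex^'n \<Rightarrow> complex^'n \<Rightarrow> complex^'n \<Rightarrow> complex^'n" where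
  "rank_one_op f g = (\<lambda>x. cinner x f *s g)"

lemma E_op_singleton: "E_op {i} F G = rank_one_op (F i) (G i)"
  by (rule ext) (simp add: E_op_def rank_one_op_def)

lemma rank_one_op_scale_real:
  "rank_one_op (of_real s *s f) (of_real s *s f) = rank_one_op f (of_real (s\<^sup>2) *s f)"
  by (rule ext) (simp add: rank_one_op_def cinner_scale_right vector_smult_assoc power2_eq_square)

lemma frob_norm_rank_one: "frob_norm (rank_one_op f g) = norm f * norm g"
proof -
  have "(\<Sum>j\<in>UNIV. (norm (cinner (axis j 1) f *s g))\<^sup>2) = (norm f * norm g)\<^sup>2"
    unfolding norm_vector_smult cinner_axis power_mult_distrib power2_norm_vec[of f]
      sum_distrib_right
    by simp
  then show ?thesis unfolding frob_norm_def rank_one_op_def by simp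
qed

lemma rank_one_numerical_range_le:
  assumes "norm u = 1"
  shows "cmod (cinner (rank_one_op f g u) u) \<le> norm f * norm g"
proof -
  have "cmod (cinner (rank_one_op f g u) u) = cmod (cinner u f) * cmod (cinner g u)"
    by (simp add: rank_one_op_def cinner_scale_left norm_mult)
  also have "\<dots> \<le> (norm u * norm f) * (norm g * norm u)"
    by (intro mult_mono cinner_Cauchy_Schwarz) auto
  finally show ?thesis using assms by simp
qed

lemma numerical_radius_rank_one_le: "numerical_radius (rank_one_op f g) \<le> norm f * norm g"
  unfolding numerical_radius_def
  by (rule cSup_least) (use ex_norm_eq_1_vec rank_one_numerical_range_le in auto)

lemma numerical_radius_rank_one_ge:
  fixes f g :: "complex^'n"
  shows "cmod (cinner g f) \<le> numerical_radius (rank_one_op f g)"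
proof -
  let ?S = "{cmod (cinner (rank_one_op f g u) u) |u. norm u = 1}"
  have bdd: "bdd_above ?S"
    by (rule bdd_aboveI) (use rank_one_numerical_range_le in auto)
  show ?thesis
  proof (cases "f = 0")
    case True
    obtain u :: "complex^'n" where "norm u = 1" using ex_norm_eq_1_vec by blast
    then have "cmod (cinner (rank_one_op f g u) u) \<in> ?S" by auto
    then show ?thesis using True bdd unfolding numerical_radius_def
      by (intro cSup_upper2) auto
  next
    case False
    define u where "u = complex_of_real (1 / norm f) *s f"
    have "norm u = 1" using False by (simp add: u_def norm_vector_smult norm_divide)
    moreover have "cinner (rank_one_op f g u) u = cinner g f"
      using False
      by (simp add: u_def rank_one_op_def cinner_scale_left cinner_scale_right cinner_self
          power2_eq_square)
    ultimately have "cmod (cinner g f) \<in> ?S" by (metis (mono_tags, lifting) mem_Collect_eq)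
    then show ?thesis using bdd unfolding numerical_radius_def by (rule cSup_upper)
  qed
qed

text \<open>The only possible nonzero eigenvalue of x \<mapsto> \<langle>x, f\<rangle> g is \<langle>g, f\<rangle>, with eigenvector g.\<close>

lemma spectral_radius_rank_one:
  assumes trace: "cinner g f \<noteq> 0"
  shows "spectral_radius (rank_one_op f g) = cmod (cinner g f)"
  unfolding spectral_radius_def rank_one_op_def
proof (rule cSup_eq_maximum)
  have g0: "g \<noteq> 0" using trace by auto
  then show "cmod (cinner g f) \<in> {cmod l |l. \<exists>x. x \<noteq> 0 \<and> cinner x f *s g = l *s x}"
    by blast
  fix y assume "y \<in> {cmod l |l. \<exists>x. x \<noteq> 0 \<and> cinner x f *s g = l *s x}"
  then obtain l x where y: "y = cmod l" and x0: "x \<noteq> 0" and ev: "cinner x f *s g = l *s x"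
    by auto
  show "y \<le> cmod (cinner g f)"
  proof (cases "l = 0")
    case False
    define c where "c = cinner x f / l"
    have xc: "x = c *s g"
    proof -
      have "x = (1 / l) *s (l *s x)" using False by (simp add: vector_smult_assoc)
      also have "\<dots> = c *s g" unfolding ev[symmetric] by (simp add: vector_smult_assoc c_def)
      finally show ?thesis .
    qed
    have "(c * cinner g f) *s g = (l * c) *s g"
      using ev xc by (simp add: cinner_scale_left vector_smult_assoc)
    then have "c * cinner g f = l * c" using g0 by (rule vector_smult_cancel_right)
    moreover have "c \<noteq> 0" using x0 xc by auto
    ultimately show ?thesis using y by (simp add: mult.commute)
  qed (use y in simp)
qed

lemma spectral_radius_rank_one_zero: "spectral_radius (rank_one_op 0 (g::complex^'n)) = 0"
  unfolding spectral_radius_def rank_one_op_def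
proof (rule cSup_eq_maximum)
  obtain u :: "complex^'n" where "norm u = 1" using ex_norm_eq_1_vec by blast
  then show "0 \<in> {cmod l |l. \<exists>x. x \<noteq> 0 \<and> cinner x 0 *s g = l *s x}"
    by (intro CollectI exI[of _ 0]) auto
  fix y assume "y \<in> {cmod l |l. \<exists>x. x \<noteq> 0 \<and> cinner x 0 *s g = l *s x}"
  then show "y \<le> 0" by auto
qed

text \<open>On rank-one operators T the measure bounds |tr T| from above and is tr T when T \<ge> 0.\<close>

definition rank_one_trace_measure :: "'n::finite measure_op \<Rightarrow> bool" where
  "rank_one_trace_measure M \<longleftrightarrow>
     (\<forall>f g. cinner g f \<noteq> 0 \<longrightarrow> cmod (cinner g f) \<le> M (rank_one_op f g)) \<and>
     (\<forall>h. M (rank_one_op h h) = (norm h)\<^sup>2)"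

lemma rank_one_trace_measure_frob_norm: "rank_one_trace_measure frob_norm"
  unfolding rank_one_trace_measure_def frob_norm_rank_one
  by (auto simp: power2_eq_square) (metis cinner_Cauchy_Schwarz mult.commute)

lemma rank_one_trace_measure_spectral_radius: "rank_one_trace_measure spectral_radius"
  unfolding rank_one_trace_measure_def
proof (intro conjI allI impI)
  show "spectral_radius (rank_one_op h h) = (norm h)\<^sup>2" for h :: "complex^'a"
    by (cases "h = 0")
      (simp_all add: spectral_radius_rank_one_zero spectral_radius_rank_one cinner_self norm_power)
qed (simp add: spectral_radius_rank_one)

lemma rank_one_trace_measure_numerical_radius: "rank_one_trace_measure numerical_radius"
  unfolding rank_one_trace_measure_def
proof (intro conjI allI impI)
  show "numerical_radius (rank_one_op h h) = (norm h)\<^sup>2" for h :: "complex^'a"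
    using numerical_radius_rank_one_le[of h h] numerical_radius_rank_one_ge[of h h]
    by (simp add: cinner_self norm_mult power2_eq_square)
qed (simp add: numerical_radius_rank_one_ge)

subsection \<open>The optimal value over all dual pairs\<close>

lemma dual_trace:
  fixes F G :: "nat \<Rightarrow> complex^'n"
  assumes "is_dual N F G"
  shows "(\<Sum>i=1..N. cinner (F i) (G i)) = of_nat CARD('n)"
proof -
  have diag: "(\<Sum>i=1..N. F i $ j * cnj (G i $ j)) = 1" for j
  proof -
    have "axis j 1 = (\<Sum>i=1..N. cinner (axis j 1) (G i) *s F i)"
      using assms unfolding is_dual_def by blast
    then have "(axis j 1 :: complex^'n) $ j = (\<Sum>i=1..N. cinner (axis j 1) (G i) *s F i) $ j"
      by simp
    then show ?thesis by (simp add: sum_component cinner_axis mult.commute)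
  qed
  have "(\<Sum>i=1..N. cinner (F i) (G i)) = (\<Sum>j\<in>UNIV. \<Sum>i=1..N. F i $ j * cnj (G i $ j))"
    unfolding cinner_def by (rule sum.swap)
  also have "\<dots> = (\<Sum>j\<in>(UNIV::'n set). 1)" by (simp only: diag)
  finally show ?thesis by simp
qed

lemma M1_dual_ge:
  fixes F G :: "nat \<Rightarrow> complex^'n"
  assumes M: "rank_one_trace_measure M" and N: "1 \<le> N" and dual: "is_dual N F G"
  shows "real CARD('n) / real N \<le> M1 M N F G"
proof -
  let ?c = "real CARD('n) / real N"
  have "real CARD('n) = cmod (\<Sum>i=1..N. cinner (G i) (F i))"
    using arg_cong[OF dual_trace[OF dual], of cnj] by (simp add: cinner_commute[of "G _"])
  also have "\<dots> \<le> (\<Sum>i=1..N. cmod (cinner (G i) (F i)))" by (rule norm_sum)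
  finally have traces: "real CARD('n) \<le> (\<Sum>i=1..N. cmod (cinner (G i) (F i)))" .
  have "\<exists>i\<in>{1..N}. ?c \<le> cmod (cinner (G i) (F i))"
  proof (rule ccontr)
    assume "\<not> ?thesis"
    then have "(\<Sum>i=1..N. cmod (cinner (G i) (F i))) < (\<Sum>i=1..N. ?c)"
      using N by (intro sum_strict_mono) (auto simp: not_le)
    then show False using traces N by simp
  qed
  then obtain i where i: "i \<in> {1..N}" "?c \<le> cmod (cinner (G i) (F i))" ..
  have "cinner (G i) (F i) \<noteq> 0" using i(2) N by (auto simp: divide_le_0_iff)
  then have "?c \<le> M (E_op {i} F G)"
    using i(2) M unfolding E_op_singleton rank_one_trace_measure_def by (meson order_trans)
  also have "\<dots> \<le> M1 M N F G" unfolding M1_def by (rule Max_ge) (use i in auto)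
  finally show ?thesis .
qed

text \<open>The harmonic frame: h_k has entries \<omega>^(k idx(j))/\<surd>N for an N-th root of unity \<omega> and an
  injection idx of the coordinates into {0..<N}; its synthesis matrix has orthonormal columns.\<close>

definition root_of_unity :: "nat \<Rightarrow> complex" where
  "root_of_unity N = exp (2 * of_real pi * \<i> / of_nat N)"

lemma root_of_unity_power: "root_of_unity N ^ p = exp (2 * of_real pi * \<i> * of_nat p / of_nat N)"
  unfolding root_of_unity_def exp_of_nat_mult[symmetric] by (simp add: field_simps)

lemma norm_root_of_unity_power [simp]: "cmod (root_of_unity N ^ p) = 1"
  by (simp add: root_of_unity_power)

lemma cnj_mult_self_root_of_unity_power:
  "cnj (root_of_unity N ^ p) * root_of_unity N ^ p = 1"
  by (metis complex_norm_square mult.commute norm_root_of_unity_power of_real_1 power_one)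

lemma root_of_unity_power_N: "1 \<le> N \<Longrightarrow> root_of_unity N ^ N = 1"
  by (simp add: root_of_unity_power)

lemma root_of_unity_power_eq_iff:
  "1 \<le> N \<Longrightarrow> p < N \<Longrightarrow> q < N \<Longrightarrow> root_of_unity N ^ p = root_of_unity N ^ q \<longleftrightarrow> p = q"
  unfolding root_of_unity_power by (simp add: complex_root_unity_eq)

lemma root_of_unity_orthogonality:
  assumes N: "1 \<le> N" and p: "p < N" and q: "q < N"
  shows "(\<Sum>k=1..N. root_of_unity N ^ (k * p) * cnj (root_of_unity N ^ (k * q)))
       = (if p = q then of_nat N else 0)"
proof -
  let ?\<omega> = "root_of_unity N"
  define w where "w = ?\<omega> ^ p * cnj (?\<omega> ^ q)"
  have terms: "?\<omega> ^ (k * p) * cnj (?\<omega> ^ (k * q)) = w ^ k" for k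
    by (simp add: w_def power_mult[symmetric] power_mult_distrib mult.commute)
  have w1: "w = 1 \<longleftrightarrow> p = q"
  proof
    assume "w = 1"
    then have "?\<omega> ^ q = w * ?\<omega> ^ q" by simp
    also have "\<dots> = ?\<omega> ^ p * (cnj (?\<omega> ^ q) * ?\<omega> ^ q)" by (simp only: w_def mult.assoc)
    finally have "?\<omega> ^ q = ?\<omega> ^ p"
      by (simp only: cnj_mult_self_root_of_unity_power mult_1_right)
    then show "p = q" using root_of_unity_power_eq_iff[OF N p q] by simp
  next
    assume "p = q"
    then show "w = 1"
      unfolding w_def by (simp only: mult.commute[of "?\<omega> ^ q"] cnj_mult_self_root_of_unity_power)
  qed
  have "(?\<omega> ^ r) ^ N = 1" for r
    using N by (metis power_mult mult.commute root_of_unity_power_N power_one)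
  then have wN: "w ^ N = 1"
    unfolding w_def power_mult_distrib complex_cnj_power[symmetric] by simp
  show ?thesis
  proof (cases "p = q")
    case False
    have "(1 - w) * (\<Sum>k=1..N. w ^ k) = w ^ 1 - w ^ Suc N" using N by (rule sum_gp_multiplied)
    then have "(\<Sum>k=1..N. w ^ k) = 0" using wN w1 False by simp
    then show ?thesis using False unfolding terms by simp
  next
    case True
    then have "w = 1" using w1 by simp
    then show ?thesis unfolding terms using True by simp
  qed
qed

definition harmonic_frame :: "nat \<Rightarrow> ('n \<Rightarrow> nat) \<Rightarrow> nat \<Rightarrow> complex^'n" where
  "harmonic_frame N idx k = (\<chi> j. root_of_unity N ^ (k * idx j) / of_real (sqrt (real N)))"

lemma harmonic_frame_columns_orthonormal:
  assumes N: "1 \<le> N" and idx: "inj idx" "\<And>j. idx j < N"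
  shows "(\<Sum>k=1..N. harmonic_frame N idx k $ j * cnj (harmonic_frame N idx k $ l))
       = (if l = j then 1 else 0)"
proof -
  let ?\<omega> = "root_of_unity N"
  have "(\<Sum>k=1..N. harmonic_frame N idx k $ j * cnj (harmonic_frame N idx k $ l))
      = (\<Sum>k=1..N. ?\<omega> ^ (k * idx j) * cnj (?\<omega> ^ (k * idx l))) / of_nat N"
    unfolding sum_divide_distrib
  proof (rule sum.cong)
    define r :: complex where "r = of_real (sqrt (real N))"
    have "r * cnj r = of_nat N" unfolding r_def by (simp flip: of_real_mult)
    then show "harmonic_frame N idx k $ j * cnj (harmonic_frame N idx k $ l)
        = ?\<omega> ^ (k * idx j) * cnj (?\<omega> ^ (k * idx l)) / of_nat N" for k
      by (simp add: harmonic_frame_def flip: r_def)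
  qed simp
  also have "\<dots> = (if l = j then 1 else 0)"
    using root_of_unity_orthogonality[OF N idx(2) idx(2), of j l] N injD[OF idx(1), of j l]
    by auto
  finally show ?thesis .
qed

lemma harmonic_frame_self_dual:
  fixes idx :: "'n::finite \<Rightarrow> nat"
  assumes "1 \<le> N" "inj idx" "\<And>j. idx j < N"
  shows "is_dual N (harmonic_frame N idx) (harmonic_frame N idx)"
  unfolding is_dual_def
proof (intro allI)
  fix x :: "complex^'n"
  let ?h = "harmonic_frame N idx"
  have "(\<Sum>i=1..N. cinner x (?h i) *s ?h i) $ j = x $ j" for j
  proof -
    have "(\<Sum>i=1..N. cinner x (?h i) *s ?h i) $ j
        = (\<Sum>i=1..N. \<Sum>l\<in>UNIV. x $ l * (?h i $ j * cnj (?h i $ l)))"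
      by (simp add: sum_component cinner_def sum_distrib_left mult_ac)
    also have "\<dots> = (\<Sum>l\<in>UNIV. x $ l * (\<Sum>i=1..N. ?h i $ j * cnj (?h i $ l)))"
      by (subst sum.swap) (simp add: sum_distrib_left)
    also have "\<dots> = (\<Sum>l\<in>UNIV. x $ l * (if l = j then 1 else 0))"
      by (simp only: harmonic_frame_columns_orthonormal[OF assms])
    also have "\<dots> = x $ j" by (simp add: if_distrib cong: if_cong)
    finally show ?thesis .
  qed
  then show "x = (\<Sum>i=1..N. cinner x (?h i) *s ?h i)" by (simp add: vec_eq_iff)
qed

lemma power2_norm_harmonic_frame:
  "1 \<le> N \<Longrightarrow> (norm (harmonic_frame N idx k :: complex^'n))\<^sup>2 = real CARD('n) / real N"
  unfolding power2_norm_vec by (simp add: harmonic_frame_def norm_divide power_divide)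

lemma Inf_M1_dual_pairs:
  fixes M :: "'n::finite measure_op"
  assumes M: "rank_one_trace_measure M" and N: "CARD('n) \<le> N"
  shows "Inf {M1 M N F G | F G. is_dual N F G} = real CARD('n) / real N"
proof (rule cInf_eq_minimum)
  have "0 < CARD('n)" by simp
  then have N1: "1 \<le> N" using N by linarith
  obtain idx where bij: "bij_betw idx (UNIV::'n set) {0..<CARD('n)}"
    using ex_bij_betw_finite_nat[of "UNIV::'n set"] by auto
  have inj: "inj idx" using bij by (rule bij_betw_imp_inj_on)
  have "idx j < CARD('n)" for j using bij_betwE[OF bij] by simp
  then have bound: "idx j < N" for j using N by (rule less_le_trans)
  let ?h = "harmonic_frame N idx :: nat \<Rightarrow> complex^'n"
  have dual: "is_dual N ?h ?h" by (rule harmonic_frame_self_dual[OF N1 inj bound])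
  have "M (E_op {k} ?h ?h) = real CARD('n) / real N" for k
    using M power2_norm_harmonic_frame[OF N1]
    unfolding E_op_singleton rank_one_trace_measure_def by simp
  then have "M1 M N ?h ?h = real CARD('n) / real N"
    using N1 unfolding M1_def by (simp add: image_constant_conv)
  with dual show "real CARD('n) / real N \<in> {M1 M N F G | F G. is_dual N F G}"
    by (intro CollectI exI[of _ ?h] conjI) simp_all
  show "real CARD('n) / real N \<le> x" if "x \<in> {M1 M N F G | F G. is_dual N F G}" for x
    using that by (auto intro: M1_dual_ge[OF M N1])
qed

subsection \<open>Tight frames\<close>

lemma frame_op_add: "frame_op N F (x + y) = frame_op N F x + frame_op N F y"
  by (simp add: vec_eq_iff frame_op_def sum_component cinner_add_left ring_distribs sum.distrib)

lemma frame_op_scale: "frame_op N F (c *s x) = c *s frame_op N F x"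
  by (simp add: vec_eq_iff frame_op_def sum_component cinner_scale_left sum_distrib_left mult_ac)

lemma cinner_frame_op: "cinner (frame_op N F x) x = of_real (\<Sum>i=1..N. (cmod (cinner x (F i)))\<^sup>2)"
proof -
  have "cinner (frame_op N F x) x = (\<Sum>i=1..N. cinner x (F i) * cinner (F i) x)"
    unfolding frame_op_def cinner_sum_left cinner_scale_left ..
  also have "\<dots> = (\<Sum>i=1..N. of_real ((cmod (cinner x (F i)))\<^sup>2))"
  proof (rule sum.cong)
    show "cinner x (F i) * cinner (F i) x = of_real ((cmod (cinner x (F i)))\<^sup>2)" for i
      by (subst cinner_commute[of "F i"]) (simp add: complex_norm_square[symmetric])
  qed simp
  finally show ?thesis by simp
qed

text \<open>Over \<complex>, polarization recovers a linear map from its quadratic form.\<close>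

lemma linear_map_eq_0_if_cinner_self_eq_0:
  fixes D :: "complex^'n \<Rightarrow> complex^'n"
  assumes add: "\<And>x y. D (x + y) = D x + D y" and scale: "\<And>c x. D (c *s x) = c *s D x"
    and quad: "\<And>x. cinner (D x) x = 0"
  shows "D x = 0"
proof -
  have sym: "cinner (D x) y + cinner (D y) x = 0" for x y
  proof -
    have "0 = cinner (D (x + y)) (x + y)" using quad by simp
    also have "\<dots> = cinner (D x) x + cinner (D x) y + cinner (D y) x + cinner (D y) y"
      by (simp add: add cinner_add_left cinner_add_right)
    finally show ?thesis using quad by simp
  qed
  have swap: "cinner (D x) y = cinner (D y) x" for x y
  proof -
    have "cinner (D x) (\<i> *s y) + cinner (D (\<i> *s y)) x = 0" by (rule sym)
    then have "- \<i> * cinner (D x) y + \<i> * cinner (D y) x = 0"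
      by (simp add: scale cinner_scale_left cinner_scale_right)
    then have "\<i> * (cinner (D y) x - cinner (D x) y) = 0" by (simp add: algebra_simps)
    then show ?thesis by simp
  qed
  have "cinner (D x) (D x) = 0" using sym[of x "D x"] swap[of x "D x"] by simp
  then have "(norm (D x))\<^sup>2 = 0" unfolding cinner_self by simp
  then show ?thesis by simp
qed

lemma tight_frame_op:
  fixes F :: "nat \<Rightarrow> complex^'n"
  assumes tight: "\<And>f. (\<Sum>i=1..N. (cmod (cinner f (F i)))\<^sup>2) = A * (norm f)\<^sup>2"
  shows "frame_op N F x = complex_of_real A *s x"
proof -
  define D where "D x = frame_op N F x - complex_of_real A *s x" for x
  have "D x = 0"
  proof (rule linear_map_eq_0_if_cinner_self_eq_0[where D = D])
    show "D (x + y) = D x + D y" for x y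
      by (simp add: D_def frame_op_add vector_add_ldistrib algebra_simps)
    show "D (c *s x) = c *s D x" for c x
      by (simp add: D_def frame_op_scale vec_eq_iff algebra_simps)
    show "cinner (D x) x = 0" for x
    proof -
      have "cinner (D x) x = cinner (frame_op N F x) x - cinner (complex_of_real A *s x) x"
        unfolding D_def cinner_def by (simp add: sum_subtractf ring_distribs)
      also have "\<dots> = 0" unfolding cinner_frame_op tight cinner_scale_left cinner_self by simp
      finally show ?thesis .
    qed
  qed
  then show ?thesis unfolding D_def by simp
qed

lemma canonical_dual_tight:
  assumes tight: "\<And>f. (\<Sum>i=1..N. (cmod (cinner f (F i)))\<^sup>2) = A * (norm f)\<^sup>2" and A: "0 < A"
  shows "canonical_dual N F i = complex_of_real (1 / A) *s F i"
proof -
  have "inj (\<lambda>x::complex^'n. complex_of_real A *s x)"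
    by (rule inj_on_inverseI[of _ "\<lambda>x. complex_of_real (1 / A) *s x"])
      (use A in \<open>simp add: vector_smult_assoc flip: of_real_mult\<close>)
  then show ?thesis
    unfolding canonical_dual_def tight_frame_op[OF tight, abs_def]
    by (rule inv_f_eq) (use A in \<open>simp add: vector_smult_assoc\<close>)
qed

lemma canonical_dual_is_dual_tight:
  fixes F :: "nat \<Rightarrow> complex^'n"
  assumes tight: "\<And>f. (\<Sum>i=1..N. (cmod (cinner f (F i)))\<^sup>2) = A * (norm f)\<^sup>2" and A: "0 < A"
  shows "is_dual N F (canonical_dual N F)"
  unfolding is_dual_def
proof
  fix f :: "complex^'n"
  have "(\<Sum>i=1..N. cinner f (canonical_dual N F i) *s F i)
      = complex_of_real (1 / A) *s frame_op N F f"
    unfolding canonical_dual_tight[OF tight A] frame_op_def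
    by (simp add: vec_eq_iff sum_component cinner_scale_right sum_distrib_left mult_ac)
  also have "\<dots> = f" unfolding tight_frame_op[OF tight] using A by (simp add: vector_smult_assoc)
  finally show "f = (\<Sum>i=1..N. cinner f (canonical_dual N F i) *s F i)" by simp
qed

text \<open>E_op {i} F (canonical_dual N F) = \<langle>\<cdot>, f_i/\<surd>A\<rangle> f_i/\<surd>A is positive.\<close>

lemma M1_canonical_dual_tight:
  assumes M: "rank_one_trace_measure M"
    and tight: "\<And>f. (\<Sum>i=1..N. (cmod (cinner f (F i)))\<^sup>2) = A * (norm f)\<^sup>2" and A: "0 < A"
  shows "M1 M N F (canonical_dual N F) = Max ((\<lambda>i. (norm (F i))\<^sup>2 / A) ` {1..N})"
proof -
  let ?s = "complex_of_real (sqrt (1 / A))"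
  have "E_op {i} F (canonical_dual N F) = rank_one_op (?s *s F i) (?s *s F i)" for i
    unfolding E_op_singleton canonical_dual_tight[OF tight A] rank_one_op_scale_real
    using A by simp
  moreover have "(norm (?s *s F i))\<^sup>2 = (norm (F i))\<^sup>2 / A" for i
    using A by (simp add: norm_vector_smult power_mult_distrib)
  ultimately show ?thesis
    using M unfolding M1_def rank_one_trace_measure_def by simp
qed

lemma optimal_canonical_dual_tight_iff:
  fixes F :: "nat \<Rightarrow> complex^'n::finite"
  assumes M: "rank_one_trace_measure M" and N: "CARD('n) \<le> N"
    and tight: "\<And>f. (\<Sum>i=1..N. (cmod (cinner f (F i)))\<^sup>2) = A * (norm f)\<^sup>2" and A: "0 < A"
  shows "optimal M N F (canonical_dual N F)
    \<longleftrightarrow> Max ((\<lambda>i. (norm (F i))\<^sup>2 / A) ` {1..N}) = real CARD('n) / real N"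
  unfolding optimal_def M1_canonical_dual_tight[OF M tight A] Inf_M1_dual_pairs[OF M N]
  using canonical_dual_is_dual_tight[OF tight A] by simp

theorem theorem6p2:
  fixes F :: "nat \<Rightarrow> complex^'n::finite" and N :: nat
  assumes "CARD('n) \<le> N"
    and "is_tight_frame N F"
  shows "(optimal frob_norm N F (canonical_dual N F) \<longleftrightarrow>
           optimal spectral_radius N F (canonical_dual N F))
       \<and> (optimal spectral_radius N F (canonical_dual N F) \<longleftrightarrow>
           optimal numerical_radius N F (canonical_dual N F))"
proof -
  obtain A where A: "0 < A"
    and tight: "\<And>f. (\<Sum>i=1..N. (cmod (cinner f (F i)))\<^sup>2) = A * (norm f)\<^sup>2"
    using assms(2) unfolding is_tight_frame_def by blast
  note optimal_iff = optimal_canonical_dual_tight_iff[OF _ assms(1) tight A]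
  show ?thesis
    using optimal_iff[OF rank_one_trace_measure_frob_norm]
      optimal_iff[OF rank_one_trace_measure_spectral_radius]
      optimal_iff[OF rank_one_trace_measure_numerical_radius]
    by simp
qed

end
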